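(* Let $0<K_2<K_1<1/27$ and write $\tau_i=\tau_{K_i}$, $i=1,2$. (a) For any $t_0\in\mathbb{R}$ and $n\in\mathbb{Z}$ the curves $t\mapsto y_{K_1}(t+t_0)$ and $t\mapsto y_{K_2}(t)$ intersect exactly once in the interval $(n\tau_2/2,(n+1)\tau_2/2)$. (b) (i) If $0\le t\le\tau_2/6$ then $y_{K_2}(2\tau_2/3-t)>y_{K_1}(2\tau_1/3-t)$; and (ii) if in addition $\tau_2\le3\tau_1$ then $y_{K_2}(\tau_2-t)<y_{K_1}(\tau_1-t)$.
   Context: For $0<K<1/27$ let $U_K(y)=\tfrac12Ky-\tfrac18y^2(1-y)^2$; it has zeros $0<a(K)<b(K)<1<c(K)$ with $U_K<0$ on $(a(K),b(K))$. Let $\tau_K=2\int_{a(K)}^{b(K)}dy/\sqrt{-2U_K(y)}$. Define $y_K:\mathbb{R}\to[a(K),b(K)]$ as follows: for $0\le t\le\tau_K/2$, $y_K(t)$ is the inverse of the increasing function $y\mapsto\int_{a(K)}^{y}dw/\sqrt{-2U_K(w)}$, $y\in[a(K),b(K)]$; then $y_K$ is extended to $\mathbb{R}$ as an even function of period $\tau_K$. Equivalently, $y_K$ is the solution of $\tfrac12y'(t)^2+U_K(y(t))=0$ with $y_K(0)=a(K)$ oscillating between $a(K)$ and $b(K)$. *)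

theory Defs
  imports "HOL-Analysis.Analysis"
begin

definition U :: "real \<Rightarrow> real \<Rightarrow> real" where
  "U K y = K * y / 2 - y\<^sup>2 * (1 - y)\<^sup>2 / 8"

definition zeros_abc :: "real \<Rightarrow> real \<times> real \<times> real" where
  "zeros_abc K = (THE (a, b, c). 0 < a \<and> a < b \<and> b < 1 \<and> 1 < c \<and>
      U K a = 0 \<and> U K b = 0 \<and> U K c = 0 \<and> (\<forall>y. a < y \<and> y < b \<longrightarrow> U K y < 0))"

definition aK :: "real \<Rightarrow> real" where "aK K = fst (zeros_abc K)"
definition bK :: "real \<Rightarrow> real" where "bK K = fst (snd (zeros_abc K))"
definition cK :: "real \<Rightarrow> real" where "cK K = snd (snd (zeros_abc K))"

text \<open>F_K(y) = int_{a(K)}^{y} dw / sqrt(-2 U_K(w))  (Henstock-Kurzweil integral; the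
  integrand is integrable with integrable endpoint singularities).\<close>
definition FK :: "real \<Rightarrow> real \<Rightarrow> real" where
  "FK K y = integral {aK K..y} (\<lambda>w. 1 / sqrt (- 2 * U K w))"

definition tauK :: "real \<Rightarrow> real" where
  "tauK K = 2 * integral {aK K..bK K} (\<lambda>y. 1 / sqrt (- 2 * U K y))"

definition yhalf :: "real \<Rightarrow> real \<Rightarrow> real" where
  "yhalf K t = (THE y. aK K \<le> y \<and> y \<le> bK K \<and> FK K y = t)"

text \<open>Even, tau_K-periodic extension: y_K(t) = yhalf(|t - tau_K * round(t / tau_K)|),
  where the argument lies in [0, tau_K/2].\<close>
definition yK :: "real \<Rightarrow> real \<Rightarrow> real" where
  "yK K t = yhalf K \<bar>t - tauK K * of_int (round (t / tauK K))\<bar>"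

end

theory Submission
  imports Defs
begin

text \<open>
  The substitution \<open>sin\<^sup>2 \<Phi> = b (y - a) / ((b - a) y)\<close> turns \<open>F\<^sub>K\<close> into
  \<open>4 \<integral>\<^sub>0\<^sup>\<Phi> dp / \<surd>(X\<^sub>0 cos\<^sup>2 p + Y\<^sub>0 sin\<^sup>2 p)\<close> with \<open>X\<^sub>0 = b (c - a)\<close>, \<open>Y\<^sub>0 = a (c - b)\<close>;
  so \<open>F\<^sub>K\<close> is a continuous increasing bijection \<open>[a, b] \<rightarrow> [0, \<tau>/2]\<close>, and after one Landen
  step \<open>\<tau>\<^sub>K\<close> is a complete elliptic integral whose parameters increase with \<open>c(K)\<close>, whence
  \<open>\<tau>\<^sub>K\<close> decreases in \<open>K\<close>. The algebraic correspondences \<open>y \<mapsto> 1 + K/\<lambda> - y\<close>,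
  \<open>\<lambda> = \<plusminus>\<surd>(-2 U(y)) + (y\<^sup>2 - y)/2\<close>, preserve \<open>dy / \<surd>(-2 U)\<close> up to sign; they give
  \<open>y\<^sub>K(\<tau>/6) = (1 - b)/2\<close> and \<open>y\<^sub>K(\<tau>/3) = (1 - a)/2\<close>.

  For (a): \<open>a(K\<^sub>2) < a(K\<^sub>1) < b(K\<^sub>1) < b(K\<^sub>2)\<close> and \<open>F\<^sub>K\<^sub>1' > F\<^sub>K\<^sub>2'\<close> on \<open>[a(K\<^sub>1), b(K\<^sub>1)]\<close>.
  On a half period \<open>F\<^sub>K\<^sub>2(y\<^sub>K\<^sub>2(t))\<close> moves at unit speed while \<open>F\<^sub>K\<^sub>1(y\<^sub>K\<^sub>1(t + t\<^sub>0))\<close> moves at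
  most at unit speed, so two crossings are impossible; one exists because \<open>y\<^sub>K\<^sub>2\<close> runs from
  \<open>a(K\<^sub>2)\<close> to \<open>b(K\<^sub>2)\<close>. For (b), the sign of \<open>y\<^sub>K\<^sub>1(t + t\<^sub>0) - y\<^sub>K\<^sub>2(t)\<close> at \<open>\<tau>\<^sub>2/2\<close>,
  \<open>2\<tau>\<^sub>2/3\<close> (resp. \<open>5\<tau>\<^sub>2/6\<close>) and \<open>\<tau>\<^sub>2\<close>, together with the unique crossing in
  \<open>(\<tau>\<^sub>2/2, \<tau>\<^sub>2)\<close>, fixes the sign on \<open>[\<tau>\<^sub>2/2, 2\<tau>\<^sub>2/3]\<close> (resp. \<open>[5\<tau>\<^sub>2/6, \<tau>\<^sub>2]\<close>).
\<close>

section \<open>Roots of the cubic\<close>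

lemma minus_two_U_eq: "- 2 * U K y = y / 4 * (y * (1 - y)^2 - 4 * K)"
  unfolding U_def by (simp add: power2_eq_square field_simps)

lemma cubic_factor_by_roots:
  fixes a b c K y :: real
  assumes "a \<noteq> b" "a \<noteq> c" "b \<noteq> c"
    and ha: "a * (1 - a)^2 = 4 * K" and hb: "b * (1 - b)^2 = 4 * K" and hc: "c * (1 - c)^2 = 4 * K"
  shows "y * (1 - y)^2 - 4 * K = (y - a) * (y - b) * (y - c)"
proof -
  have ab: "a^2 + a*b + b^2 - 2*(a + b) + 1 = 0"
  proof -
    have "(a - b) * (a^2 + a*b + b^2 - 2*(a + b) + 1) = 0"
      using ha hb by (simp add: power2_eq_square algebra_simps)
    thus ?thesis using assms(1) by simp
  qed
  have ac: "a^2 + a*c + c^2 - 2*(a + c) + 1 = 0"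
  proof -
    have "(a - c) * (a^2 + a*c + c^2 - 2*(a + c) + 1) = 0"
      using ha hc by (simp add: power2_eq_square algebra_simps)
    thus ?thesis using assms(2) by simp
  qed
  have "(b - c) * (a + b + c - 2) = 0" using ab ac by (simp add: power2_eq_square algebra_simps)
  hence c: "c = 2 - a - b" using assms(3) by simp
  show ?thesis using ha ab unfolding c by algebra
qed

definition separated_roots :: "real \<Rightarrow> real \<Rightarrow> real \<Rightarrow> real \<Rightarrow> bool" where
  "separated_roots K a b c \<longleftrightarrow> 0 < a \<and> a < 1/3 \<and> 1/3 < b \<and> b < 1 \<and> 1 < c \<and> c < 4/3 \<and>
     a * (1 - a)^2 = 4 * K \<and> b * (1 - b)^2 = 4 * K \<and> c * (1 - c)^2 = 4 * K"

lemma separated_roots_exist: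
  fixes K :: real
  assumes "0 < K" "K < 1/27"
  shows "\<exists>a b c. separated_roots K a b c"
proof -
  let ?p = "\<lambda>y::real. y * (1 - y)^2 - 4 * K"
  have cont: "continuous_on S ?p" for S by (intro continuous_intros)
  obtain a where a: "0 \<le> a" "a \<le> 1/3" "?p a = 0"
    using IVT'[of ?p 0 0 "1/3"] assms cont by (auto simp: power2_eq_square)
  obtain b where b: "1/3 \<le> b" "b \<le> 1" "?p b = 0"
    using IVT2'[of ?p 1 0 "1/3"] assms cont by (auto simp: power2_eq_square)
  obtain c where c: "1 \<le> c" "c \<le> 4/3" "?p c = 0"
    using IVT'[of ?p 1 0 "4/3"] assms cont by (auto simp: power2_eq_square)
  have "?p 0 \<noteq> 0" "?p (1/3) \<noteq> 0" "?p 1 \<noteq> 0" "?p (4/3) \<noteq> 0"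
    using assms by (simp_all add: power2_eq_square)
  hence "a \<noteq> 0" "a \<noteq> 1/3" "b \<noteq> 1/3" "b \<noteq> 1" "c \<noteq> 1" "c \<noteq> 4/3"
    using a b c by metis+
  with a b c show ?thesis unfolding separated_roots_def by (intro exI[of _ a] exI[of _ b] exI[of _ c]) auto
qed

lemma separated_roots_factor:
  "separated_roots K a b c \<Longrightarrow> y * (1 - y)^2 - 4 * K = (y - a) * (y - b) * (y - c)"
  unfolding separated_roots_def by (intro cubic_factor_by_roots) auto

lemma zeros_abc_eq:
  assumes abc: "separated_roots K a b c"
  shows "zeros_abc K = (a, b, c)"
proof -
  have U: "U K y = - (y / 8) * ((y - a) * (y - b) * (y - c))" for y
    using minus_two_U_eq[of K y] separated_roots_factor[OF abc, of y] by simp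
  have ord: "0 < a" "a < b" "b < 1" "1 < c" using abc unfolding separated_roots_def by auto
  have neg: "U K y < 0" if "a < y" "y < b" for y
  proof -
    have "0 < y * ((y - a) * ((b - y) * (c - y)))" using that ord by (intro mult_pos_pos) auto
    thus ?thesis unfolding U by (simp add: algebra_simps)
  qed
  have roots: "y \<in> {a, b, c}" if "0 < y" "U K y = 0" for y
    using that unfolding U by auto
  show ?thesis unfolding zeros_abc_def
  proof (rule the_equality)
    fix t assume "case t of (a', b', c') \<Rightarrow> 0 < a' \<and> a' < b' \<and> b' < 1 \<and> 1 < c' \<and>
      U K a' = 0 \<and> U K b' = 0 \<and> U K c' = 0 \<and> (\<forall>y. a' < y \<and> y < b' \<longrightarrow> U K y < 0)"
    then obtain a' b' c' where "t = (a', b', c')" "0 < a'" "a' < b'" "b' < 1" "1 < c'"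
      "U K a' = 0" "U K b' = 0" "U K c' = 0" by (cases t) auto
    with roots[of a'] roots[of b'] roots[of c'] ord show "t = (a, b, c)" by auto
  qed (use ord neg U in auto)
qed

lemma separated_roots_abc:
  assumes "0 < K" "K < 1/27"
  shows "separated_roots K (aK K) (bK K) (cK K)"
  using separated_roots_exist[OF assms] zeros_abc_eq unfolding aK_def bK_def cK_def by fastforce

section \<open>Elliptic integrals and Landen's transformation\<close>

definition elliptic_integrand :: "real \<Rightarrow> real \<Rightarrow> real \<Rightarrow> real" where
  "elliptic_integrand X Y p = 1 / sqrt (X * (cos p)^2 + Y * (sin p)^2)"

definition elliptic_integral :: "real \<Rightarrow> real \<Rightarrow> real \<Rightarrow> real" where
  "elliptic_integral X Y p = integral {0..p} (elliptic_integrand X Y)"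

lemma elliptic_denom_pos:
  fixes X Y p :: real
  assumes "0 < X" "0 < Y"
  shows "0 < X * (cos p)^2 + Y * (sin p)^2"
proof -
  have "min X Y = min X Y * ((cos p)^2 + (sin p)^2)" by simp
  also have "\<dots> \<le> X * (cos p)^2 + Y * (sin p)^2"
    unfolding distrib_left by (intro add_mono mult_right_mono) auto
  finally show ?thesis using assms by linarith
qed

lemma continuous_on_elliptic_integrand:
  assumes "0 < X" "0 < Y"
  shows "continuous_on S (elliptic_integrand X Y)"
  unfolding elliptic_integrand_def using elliptic_denom_pos[OF assms]
  by (intro continuous_intros) (auto simp: less_le)

lemma elliptic_integrand_antimono:
  assumes "0 < X" "X \<le> X'" "0 < Y" "Y \<le> Y'"
  shows "elliptic_integrand X' Y' p \<le> elliptic_integrand X Y p"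
proof -
  have "X * (cos p)^2 + Y * (sin p)^2 \<le> X' * (cos p)^2 + Y' * (sin p)^2"
    using assms by (intro add_mono mult_right_mono) auto
  thus ?thesis unfolding elliptic_integrand_def
    using elliptic_denom_pos[of X Y p] assms by (simp add: frac_le real_sqrt_le_mono)
qed

lemma elliptic_integral_0 [simp]: "elliptic_integral X Y 0 = 0"
  unfolding elliptic_integral_def by simp

lemma elliptic_integral_has_derivative:
  assumes "0 < X" "0 < Y" "0 < p" "p < 2"
  shows "(elliptic_integral X Y has_real_derivative elliptic_integrand X Y p) (at p)"
proof -
  have "(elliptic_integral X Y has_real_derivative elliptic_integrand X Y p) (at p within {0..2})"
    unfolding elliptic_integral_def
    using assms by (intro integral_has_real_derivative continuous_on_elliptic_integrand) auto
  thus ?thesis using assms by (simp add: at_within_Icc_at)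
qed

lemma continuous_on_elliptic_integral:
  "0 < X \<Longrightarrow> 0 < Y \<Longrightarrow> continuous_on {0..2} (elliptic_integral X Y)"
  unfolding elliptic_integral_def
  by (intro indefinite_integral_continuous_1 integrable_continuous_real continuous_on_elliptic_integrand)

lemma complete_elliptic_integral_antimono:
  assumes "0 < X" "X \<le> X'" "0 < Y" "Y \<le> Y'"
  shows "elliptic_integral X' Y' (pi/2) \<le> elliptic_integral X Y (pi/2)"
  unfolding elliptic_integral_def using assms
  by (intro integral_le integrable_continuous_real continuous_on_elliptic_integrand
      elliptic_integrand_antimono) auto

text \<open>Landen's transformation: the substitution \<open>sin q = 2 x sin p / (x + y + (x - y) sin\<^sup>2 p)\<close>
  maps the integrand for the arithmetic and geometric means of \<open>x, y\<close> onto the one for \<open>x, y\<close>.\<close>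

definition landen_sin :: "real \<Rightarrow> real \<Rightarrow> real \<Rightarrow> real" where
  "landen_sin x y p = 2 * x * sin p / (x + y + (x - y) * (sin p)^2)"

lemma landen_denom_pos:
  fixes x y p :: real
  assumes "0 < x" "0 < y"
  shows "0 < x + y + (x - y) * (sin p)^2"
proof -
  have "x + y + (x - y) * (sin p)^2 = x * (1 + (sin p)^2) + y * (1 - (sin p)^2)"
    by (simp add: algebra_simps)
  moreover have "0 < x * (1 + (sin p)^2)" using assms by (simp add: add_pos_nonneg)
  moreover have "0 \<le> y * (1 - (sin p)^2)" using assms by (simp add: abs_square_le_1)
  ultimately show ?thesis by linarith
qed

lemma landen_sin_bounds:
  assumes "0 < x" "0 < y" "0 \<le> p" "p \<le> pi/2"
  shows "0 \<le> landen_sin x y p" "landen_sin x y p \<le> 1"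
    and "0 < p \<Longrightarrow> p < pi/2 \<Longrightarrow> 0 < landen_sin x y p \<and> landen_sin x y p < 1"
proof -
  let ?D = "x + y + (x - y) * (sin p)^2"
  have D: "0 < ?D" using landen_denom_pos assms by blast
  have gap: "?D - 2 * x * sin p = (1 - sin p) * (x * (1 - sin p) + y * (1 + sin p))"
    by (simp add: power2_eq_square algebra_simps)
  have s: "0 \<le> sin p" "sin p \<le> 1" using assms by (auto intro: sin_ge_zero)
  hence "0 \<le> (1 - sin p) * (x * (1 - sin p) + y * (1 + sin p))" using assms by simp
  hence "2 * x * sin p \<le> ?D" using gap by linarith
  thus "0 \<le> landen_sin x y p" "landen_sin x y p \<le> 1"
    unfolding landen_sin_def using D s assms by (simp_all add: field_simps)
  assume p: "0 < p" "p < pi/2"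
  have "0 < sin p" using p by (auto intro: sin_gt_zero)
  moreover have "0 < cos p" using p by (intro cos_gt_zero_pi) auto
  hence "(sin p)^2 < 1" by (simp add: sin_squared_eq)
  hence "sin p < 1" by (auto simp: abs_square_less_1 abs_less_iff)
  ultimately have "0 < (1 - sin p) * (x * (1 - sin p) + y * (1 + sin p))"
    using assms by (intro mult_pos_pos add_pos_pos) auto
  hence "2 * x * sin p < ?D" using gap by linarith
  thus "0 < landen_sin x y p \<and> landen_sin x y p < 1"
    unfolding landen_sin_def using D \<open>0 < sin p\<close> assms by (simp add: field_simps)
qed

lemma landen_sin_has_derivative:
  assumes "0 < x" "0 < y"
  shows "(landen_sin x y has_real_derivative
           2 * x * cos p * (x + y - (x - y) * (sin p)^2) / (x + y + (x - y) * (sin p)^2)^2) (at p)"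
proof -
  let ?D = "x + y + (x - y) * (sin p)^2"
  have "?D \<noteq> 0" using landen_denom_pos[OF assms] by (metis less_irrefl)
  hence "(landen_sin x y has_real_derivative
      (2 * x * cos p * ?D - 2 * x * sin p * ((x - y) * (2 * sin p * cos p))) / (?D * ?D)) (at p)"
    unfolding landen_sin_def[abs_def] by (intro derivative_eq_intros) (auto simp: power2_eq_square)
  thus ?thesis by (simp add: power2_eq_square algebra_simps)
qed

lemma landen_integrand_identity:
  fixes x y p :: real
  assumes x: "0 < x" and y: "0 < y" and p: "0 < p" "p < pi/2"
  defines "u \<equiv> landen_sin x y p"
    and "D \<equiv> x + y + (x - y) * (sin p)^2" and "E \<equiv> x + y - (x - y) * (sin p)^2"
  shows "elliptic_integrand (x^2) (y^2) (arcsin u) * (inverse (sqrt (1 - u^2)) * (2 * x * cos p * E / D^2))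
       = elliptic_integrand (((x + y)/2)^2) (x * y) p"
proof -
  define M where "M = ((x + y)/2)^2 * (cos p)^2 + x * y * (sin p)^2"
  have pos: "0 < D" "0 < E" "0 < M" "0 < cos p"
    using landen_denom_pos[OF x y, of p] landen_denom_pos[OF y x, of p]
      elliptic_denom_pos[of "((x + y)/2)^2" "x * y" p] x y p
    unfolding D_def E_def M_def by (auto simp: algebra_simps intro: cos_gt_zero_pi)
  have C: "(cos p)^2 = 1 - (sin p)^2" by (simp add: cos_squared_eq)
  have "0 < u \<and> u < 1" unfolding u_def using landen_sin_bounds(3)[OF x y _ _ p] p by simp
  hence u1: "- 1 \<le> u" "u \<le> 1" by auto
  have cos_arcsin: "(cos (arcsin u))^2 = 1 - u^2" using u1 by (simp add: cos_squared_eq)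
  have u_sq: "1 - u^2 = (D^2 - 4 * x^2 * (sin p)^2) / D^2"
    unfolding u_def landen_sin_def D_def[symmetric] using pos(1) by (simp add: field_simps power2_eq_square)
  have "D^2 - 4 * x^2 * (sin p)^2 = (cos p)^2 * (4 * M)"
    unfolding D_def M_def C by (simp add: power2_eq_square field_simps)
  hence one_minus: "1 - u^2 = (cos p)^2 * (4 * M) / D^2" using u_sq by simp
  have "x^2 * (D^2 - 4 * x^2 * (sin p)^2) + y^2 * (4 * x^2 * (sin p)^2) = x^2 * E^2"
    unfolding D_def E_def by (simp add: power2_eq_square field_simps)
  hence denom: "x^2 * (1 - u^2) + y^2 * u^2 = x^2 * E^2 / D^2"
    unfolding u_sq unfolding u_def landen_sin_def D_def[symmetric] using pos(1)
    by (simp add: field_simps power2_eq_square)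
  have "elliptic_integrand (x^2) (y^2) (arcsin u) = D / (x * E)"
    unfolding elliptic_integrand_def cos_arcsin sin_arcsin[OF u1] denom
    using pos x by (simp add: real_sqrt_divide real_sqrt_mult)
  moreover have "inverse (sqrt (1 - u^2)) = D / (2 * cos p * sqrt M)"
    unfolding one_minus using pos by (simp add: real_sqrt_divide real_sqrt_mult field_simps)
  moreover have "D / (x * E) * (D / (2 * cos p * sqrt M) * (2 * x * cos p * E / D^2)) = 1 / sqrt M"
    using pos x by (simp add: field_simps power2_eq_square)
  ultimately show ?thesis unfolding elliptic_integrand_def M_def by simp
qed

lemma landen_transformation:
  fixes x y :: real
  assumes x: "0 < x" and y: "0 < y"
  shows "elliptic_integral (x^2) (y^2) (pi/2) = elliptic_integral (((x + y)/2)^2) (x * y) (pi/2)"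
proof -
  define L where "L p = arcsin (landen_sin x y p)" for p
  have L_bounds: "0 \<le> L p \<and> L p \<le> pi/2" if "0 \<le> p" "p \<le> pi/2" for p
    using landen_sin_bounds[OF x y that] arcsin_ubound arcsin_nonneg unfolding L_def by auto
  have L_open: "0 < L p \<and> L p < 2" if "0 < p" "p < pi/2" for p
    using landen_sin_bounds(3)[OF x y _ _ that] that arcsin_less_arcsin[of 0 "landen_sin x y p"]
      arcsin_ubound[of "landen_sin x y p"] pi_less_4 unfolding L_def by auto
  have "continuous_on {0..pi/2} (landen_sin x y)"
    using landen_sin_has_derivative[OF x y]
    by (meson DERIV_isCont continuous_at_imp_continuous_on)
  hence "continuous_on {0..pi/2} L"
    unfolding L_def[abs_def] using landen_sin_bounds(1,2)[OF x y]
    by (intro continuous_intros) (auto intro: order_trans[of "-1" 0])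
  hence cont: "continuous_on {0..pi/2} (\<lambda>p. elliptic_integral (x^2) (y^2) (L p))"
    using continuous_on_compose2[OF continuous_on_elliptic_integral, of "x^2" "y^2" _ L] L_bounds
      pi_less_4 x y by fastforce
  have deriv: "((\<lambda>p. elliptic_integral (x^2) (y^2) (L p)) has_real_derivative
                 elliptic_integrand (((x + y)/2)^2) (x * y) p) (at p)"
    if p: "0 < p" "p < pi/2" for p
  proof -
    have u: "- 1 < landen_sin x y p" "landen_sin x y p < 1" using landen_sin_bounds(3)[OF x y _ _ p] p by auto
    have X: "0 < x^2" "0 < y^2" using x y by simp_all
    show ?thesis
      using DERIV_chain2[OF elliptic_integral_has_derivative[OF X] 
          DERIV_chain2[OF DERIV_arcsin[OF u] landen_sin_has_derivative[OF x y]]]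
        L_open[OF p] landen_integrand_identity[OF x y p]
      unfolding L_def by simp
  qed
  have "(elliptic_integrand (((x + y)/2)^2) (x * y) has_integral
          elliptic_integral (x^2) (y^2) (L (pi/2)) - elliptic_integral (x^2) (y^2) (L 0)) {0..pi/2}"
    using cont deriv
    by (intro fundamental_theorem_of_calculus_interior_strong[of "{}"])
       (auto simp: has_real_derivative_iff_has_vector_derivative)
  moreover have "L 0 = 0" "L (pi/2) = pi/2" unfolding L_def landen_sin_def using x by simp_all
  ultimately show ?thesis unfolding elliptic_integral_def by (simp add: integral_unique)
qed

section \<open>The map \<open>F\<^sub>K\<close> and the periodic solution \<open>y\<^sub>K\<close>\<close>

locale cubic_potential =
  fixes K :: real
  assumes K_pos: "0 < K" and K_less: "K < 1/27"
begin

abbreviation "a \<equiv> aK K"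
abbreviation "b \<equiv> bK K"
abbreviation "c \<equiv> cK K"
abbreviation "tau \<equiv> tauK K"

lemma separated_roots: "separated_roots K a b c"
  using separated_roots_abc K_pos K_less by blast

lemma root_bounds: "0 < a" "a < 1/3" "1/3 < b" "b < 1" "1 < c" "c < 4/3" "a < b" "b < c"
  using separated_roots unfolding separated_roots_def by auto

lemma root_eqs: "a * (1 - a)^2 = 4 * K" "b * (1 - b)^2 = 4 * K" "c * (1 - c)^2 = 4 * K"
  using separated_roots unfolding separated_roots_def by auto

lemma cubic_factor: "y * (1 - y)^2 - 4 * K = (y - a) * (y - b) * (y - c)"
  using separated_roots_factor[OF separated_roots] .

lemma minus_two_U_factor: "- 2 * U K y = y * (y - a) * (b - y) * (c - y) / 4"
  unfolding minus_two_U_eq cubic_factor by (simp add: algebra_simps)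

lemma minus_two_U_pos: "a < y \<Longrightarrow> y < b \<Longrightarrow> 0 < - 2 * U K y"
  unfolding minus_two_U_factor using root_bounds by (intro divide_pos_pos mult_pos_pos) auto

definition inv_speed :: "real \<Rightarrow> real" where
  "inv_speed y = 1 / sqrt (- 2 * U K y)"

lemma inv_speed_pos: "a < y \<Longrightarrow> y < b \<Longrightarrow> 0 < inv_speed y"
  unfolding inv_speed_def using minus_two_U_pos by simp

definition X0 :: real where "X0 = b * (c - a)"
definition Y0 :: real where "Y0 = a * (c - b)"
definition sinsq :: "real \<Rightarrow> real" where "sinsq y = b * (y - a) / ((b - a) * y)"
definition Phi :: "real \<Rightarrow> real" where "Phi y = arcsin (sqrt (sinsq y))"

lemma X0_Y0_pos: "0 < X0" "0 < Y0"
  unfolding X0_def Y0_def using root_bounds by auto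

lemma sinsq_bounds: "a \<le> y \<Longrightarrow> y \<le> b \<Longrightarrow> 0 \<le> sinsq y \<and> sinsq y \<le> 1"
  and sinsq_bounds_strict: "a < y \<Longrightarrow> y < b \<Longrightarrow> 0 < sinsq y \<and> sinsq y < 1"
  unfolding sinsq_def using root_bounds by (auto simp: field_simps)

lemma sin_Phi: "a \<le> y \<Longrightarrow> y \<le> b \<Longrightarrow> sin (Phi y) = sqrt (sinsq y)"
  unfolding Phi_def using sinsq_bounds by (intro sin_arcsin) (auto intro: order_trans[of "-1" 0])

lemma sqrt_sinsq_bounds: "a \<le> y \<Longrightarrow> y \<le> b \<Longrightarrow> - 1 \<le> sqrt (sinsq y) \<and> sqrt (sinsq y) \<le> 1"
  using sinsq_bounds by (auto intro: order_trans[of "-1" 0])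

lemma Phi_bounds: "a \<le> y \<Longrightarrow> y \<le> b \<Longrightarrow> 0 \<le> Phi y \<and> Phi y \<le> pi/2"
  unfolding Phi_def using sinsq_bounds sqrt_sinsq_bounds arcsin_ubound arcsin_nonneg by simp

lemma Phi_bounds_strict:
  assumes "a < y" "y < b"
  shows "0 < Phi y \<and> Phi y < 2"
proof -
  have "0 < sqrt (sinsq y)" "sqrt (sinsq y) < 1" using sinsq_bounds_strict[OF assms] by auto
  hence "arcsin 0 < Phi y" unfolding Phi_def by (intro arcsin_less_arcsin) auto
  thus ?thesis using Phi_bounds[of y] assms pi_less_4 by auto
qed

lemma Phi_a: "Phi a = 0" and Phi_b: "Phi b = pi/2"
  unfolding Phi_def sinsq_def using root_bounds by simp_all

lemma continuous_on_Phi: "continuous_on {a..b} Phi"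
  unfolding Phi_def[abs_def] sinsq_def[abs_def] using sqrt_sinsq_bounds root_bounds
  by (intro continuous_intros) (auto simp: sinsq_def)

lemma Phi_has_derivative:
  assumes "a < y" "y < b"
  shows "(Phi has_real_derivative
           a * b / ((b - a) * y^2) / (2 * sqrt (sinsq y) * sqrt (1 - sinsq y))) (at y)"
proof -
  have s: "0 < sinsq y" "sinsq y < 1" using sinsq_bounds_strict[OF assms] by auto
  have y: "0 < y" "b - a \<noteq> 0" using assms root_bounds by auto
  have "(sinsq has_real_derivative
          (b * ((b - a) * y) - b * (y - a) * (b - a)) / (((b - a) * y) * ((b - a) * y))) (at y)"
    unfolding sinsq_def[abs_def] using y by (auto intro!: derivative_eq_intros)
  moreover have "(b * ((b - a) * y) - b * (y - a) * (b - a)) / (((b - a) * y) * ((b - a) * y))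
      = a * b / ((b - a) * y^2)"
  proof -
    have "b * ((b - a) * y) - b * (y - a) * (b - a) = (a * b) * (b - a)" by algebra
    moreover have "((b - a) * y) * ((b - a) * y) = (b - a) * ((b - a) * y^2)"
      by (simp add: power2_eq_square)
    ultimately show ?thesis using y by simp
  qed
  ultimately have "(sinsq has_real_derivative a * b / ((b - a) * y^2)) (at y)" by simp
  hence "(Phi has_real_derivative inverse (sqrt (1 - (sqrt (sinsq y))^2))
          * (inverse (sqrt (sinsq y)) / 2 * (a * b / ((b - a) * y^2)))) (at y)"
    unfolding Phi_def[abs_def] using s
    by (intro DERIV_chain2[OF DERIV_arcsin DERIV_chain2[OF DERIV_real_sqrt]])
       (auto intro: less_le_trans[of "-1" 0])
  thus ?thesis using s by (simp add: field_simps)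
qed

lemma elliptic_integrand_Phi:
  assumes "a < y" "y < b"
  shows "elliptic_integrand X0 Y0 (Phi y) = 1 / sqrt (a * b * (c - y) / y)"
proof -
  have nz: "0 < y" "0 < b - a" using assms root_bounds by auto
  have "(sin (Phi y))^2 = sinsq y" using sin_Phi[of y] sinsq_bounds_strict[OF assms] assms by simp
  hence "X0 * (cos (Phi y))^2 + Y0 * (sin (Phi y))^2 = X0 * (1 - sinsq y) + Y0 * sinsq y"
    by (simp add: cos_squared_eq)
  also have "\<dots> = X0 - c * (b - a) * sinsq y" unfolding X0_def Y0_def by (simp add: algebra_simps)
  also have "c * (b - a) * sinsq y = c * b * (y - a) / y" unfolding sinsq_def using nz by simp
  also have "X0 - c * b * (y - a) / y = a * b * (c - y) / y"
    unfolding X0_def using nz by (simp add: field_simps)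
  finally show ?thesis unfolding elliptic_integrand_def by simp
qed

lemma Phi_substitution:
  assumes "a < y" "y < b"
  shows "4 * elliptic_integrand X0 Y0 (Phi y) * (a * b / ((b - a) * y^2) / (2 * sqrt (sinsq y) * sqrt (1 - sinsq y)))
       = inv_speed y"
proof -
  define s where "s = sinsq y"
  have s: "0 < s" "s < 1" using sinsq_bounds_strict[OF assms] unfolding s_def by auto
  have nz: "0 < y" "0 < y - a" "0 < b - y" "0 < c - y" "0 < b - a" "0 < a" "0 < b"
    using assms root_bounds by auto
  have one_minus_s: "1 - s = a * (b - y) / ((b - a) * y)"
    unfolding s_def sinsq_def using nz by (simp add: field_simps)
  note G = elliptic_integrand_Phi[OF assms]
  define A where "A = a * b * (c - y) / y"
  define k where "k = a * b / ((b - a) * y^2)"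
  define L where "L = 4 * elliptic_integrand X0 Y0 (Phi y) * (k / (2 * sqrt s * sqrt (1 - s)))"
  have A: "0 < A" unfolding A_def using nz by simp
  have "L^2 = 16 * (1 / (sqrt A)^2) * (k^2 / (4 * (sqrt s)^2 * (sqrt (1 - s))^2))"
    unfolding L_def G A_def[symmetric] by (simp add: power_mult_distrib power_divide)
  also have "\<dots> = 16 * (1 / A) * (k^2 / (4 * s * (1 - s)))" using A s by simp
  also have "4 * s * (1 - s) = 4 * a * b * (y - a) * (b - y) / ((b - a) * y)^2"
    unfolding one_minus_s unfolding s_def sinsq_def using nz by (simp add: field_simps power2_eq_square)
  also have "16 * (1 / A) * (k^2 / (4 * a * b * (y - a) * (b - y) / ((b - a) * y)^2))
      = 4 / (y * (y - a) * (b - y) * (c - y))"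
  proof -
    \<comment> \<open>with the differences abstracted, \<open>field_simps\<close> does not multiply them out\<close>
    have "16 * (1 / (a * b * r / y)) * ((a * b / (e * y^2))^2 / (4 * a * b * p * q / (e * y)^2))
        = 4 / (y * p * q * r)" if "p \<noteq> 0" "q \<noteq> 0" "r \<noteq> 0" "e \<noteq> 0" for p q r e
      using that nz by (simp add: field_simps power2_eq_square)
    from this[of "y - a" "b - y" "c - y" "b - a"] show ?thesis unfolding A_def k_def using nz by simp
  qed
  also have "\<dots> = (inv_speed y)^2"
    unfolding inv_speed_def minus_two_U_factor using nz by (simp add: power_divide)
  finally have "L^2 = (inv_speed y)^2" .
  moreover have "0 \<le> L" unfolding L_def G k_def using s nz by simp
  ultimately show ?thesis
    using inv_speed_pos[OF assms] power2_eq_imp_eq unfolding L_def s_def k_def by fastforce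
qed

lemma continuous_on_elliptic_Phi: "continuous_on {a..b} (\<lambda>w. 4 * elliptic_integral X0 Y0 (Phi w))"
proof -
  have "continuous_on {a..b} (elliptic_integral X0 Y0 \<circ> Phi)"
    using continuous_on_compose[OF continuous_on_Phi continuous_on_subset[OF
          continuous_on_elliptic_integral[OF X0_Y0_pos]]] Phi_bounds pi_less_4 by fastforce
  thus ?thesis by (intro continuous_intros) (simp add: o_def)
qed

lemma elliptic_Phi_has_derivative:
  assumes "a < w" "w < b"
  shows "((\<lambda>w. 4 * elliptic_integral X0 Y0 (Phi w)) has_real_derivative inv_speed w) (at w)"
  using DERIV_cmult[OF DERIV_chain2[OF elliptic_integral_has_derivative[OF X0_Y0_pos]
        Phi_has_derivative[OF assms]], of 4] Phi_bounds_strict[OF assms] Phi_substitution[OF assms]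
  by (simp add: mult.assoc)

lemma FK_eq_elliptic:
  assumes "a \<le> y" "y \<le> b"
  shows "FK K y = 4 * elliptic_integral X0 Y0 (Phi y)"
proof -
  have "(inv_speed has_integral 4 * elliptic_integral X0 Y0 (Phi y) - 4 * elliptic_integral X0 Y0 (Phi a)) {a..y}"
    using continuous_on_subset[OF continuous_on_elliptic_Phi] elliptic_Phi_has_derivative assms
    by (intro fundamental_theorem_of_calculus_interior_strong[of "{}"])
       (auto simp: has_real_derivative_iff_has_vector_derivative)
  thus ?thesis unfolding FK_def inv_speed_def[abs_def] Phi_a by (simp add: integral_unique)
qed

lemma continuous_on_FK: "continuous_on {a..b} (FK K)"
  using continuous_on_eq[OF continuous_on_elliptic_Phi] FK_eq_elliptic by auto

lemma FK_has_derivative: "a < y \<Longrightarrow> y < b \<Longrightarrow> (FK K has_real_derivative inv_speed y) (at y)"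
  using has_field_derivative_transform_within_open[OF elliptic_Phi_has_derivative, of y "{a<..<b}"]
    FK_eq_elliptic by auto

lemma FK_a: "FK K a = 0"
  unfolding FK_def by simp

lemma FK_b: "FK K b = tau / 2"
  unfolding tauK_def FK_def by simp

lemma FK_less:
  assumes "a \<le> y1" "y1 < y2" "y2 \<le> b"
  shows "FK K y1 < FK K y2"
proof (rule DERIV_pos_imp_increasing_open[OF assms(2)])
  fix x assume "y1 < x" "x < y2"
  hence "a < x" "x < b" using assms by auto
  thus "\<exists>d. (FK K has_real_derivative d) (at x) \<and> 0 < d"
    using FK_has_derivative inv_speed_pos by blast
qed (use continuous_on_subset[OF continuous_on_FK] assms in auto)

lemma FK_le: "a \<le> y1 \<Longrightarrow> y1 \<le> y2 \<Longrightarrow> y2 \<le> b \<Longrightarrow> FK K y1 \<le> FK K y2"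
  using FK_less by (cases "y1 = y2") (auto simp: less_eq_real_def)

lemma FK_less_iff: "a \<le> y1 \<Longrightarrow> y1 \<le> b \<Longrightarrow> a \<le> y2 \<Longrightarrow> y2 \<le> b \<Longrightarrow> FK K y1 < FK K y2 \<longleftrightarrow> y1 < y2"
  using FK_less FK_le by (meson not_le)

lemma tauK_pos: "0 < tau"
  using FK_less[of a b] FK_a FK_b root_bounds by simp

lemma tauK_eq_elliptic: "tau = 8 * elliptic_integral X0 Y0 (pi/2)"
  using FK_eq_elliptic[of b] FK_b Phi_b root_bounds by simp


definition saw :: "real \<Rightarrow> real" where
  "saw t = \<bar>t - tau * of_int (round (t / tau))\<bar>"

lemma yK_eq_yhalf_saw: "yK K t = yhalf K (saw t)"
  unfolding yK_def saw_def ..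

lemma saw_eq_scaled: "saw t = tau * \<bar>t / tau - of_int (round (t / tau))\<bar>"
proof -
  have "t - tau * of_int (round (t / tau)) = tau * (t / tau - of_int (round (t / tau)))"
    using tauK_pos by (simp add: field_simps)
  thus ?thesis unfolding saw_def using tauK_pos by (simp add: abs_mult)
qed

lemma saw_le: "saw t \<le> \<bar>t - of_int k * tau\<bar>"
proof -
  have "t - of_int k * tau = tau * (t / tau - of_int k)" using tauK_pos by (simp add: field_simps)
  hence "\<bar>t - of_int k * tau\<bar> = tau * \<bar>t / tau - of_int k\<bar>" using tauK_pos by (simp add: abs_mult)
  thus ?thesis unfolding saw_eq_scaled using round_diff_minimal[of "t / tau" k] tauK_pos
    by (simp add: mult_left_mono)
qed

lemma saw_bounds: "0 \<le> saw t \<and> saw t \<le> tau / 2"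
  unfolding saw_eq_scaled using of_int_round_abs_le[of "t / tau"] tauK_pos
  by (auto simp: abs_minus_commute intro: mult_left_mono[of _ "1/2", simplified])

lemma saw_eq:
  assumes "\<bar>t - of_int k * tau\<bar> \<le> tau / 2"
  shows "saw t = \<bar>t - of_int k * tau\<bar>"
proof (cases "round (t / tau) = k")
  case True thus ?thesis unfolding saw_def by (simp add: mult.commute)
next
  case False
  hence "(1::real) \<le> \<bar>of_int (round (t / tau)) - of_int k\<bar>"
    by (metis of_int_1_le_iff of_int_abs of_int_diff zero_less_abs_iff zless_imp_add1_zle
        add.left_neutral right_minus_eq)
  moreover have "\<bar>of_int (round (t / tau)) * tau - of_int k * tau\<bar>
      = tau * \<bar>of_int (round (t / tau)) - of_int k\<bar>"
    using tauK_pos by (simp add: abs_mult flip: left_diff_distrib)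
  ultimately have "tau \<le> \<bar>of_int (round (t / tau)) * tau - of_int k * tau\<bar>"
    using tauK_pos mult_left_mono[of 1 _ tau] by simp
  moreover have "\<bar>of_int (round (t / tau)) * tau - of_int k * tau\<bar>
      \<le> \<bar>t - of_int (round (t / tau)) * tau\<bar> + \<bar>t - of_int k * tau\<bar>" by arith
  ultimately have "tau / 2 \<le> \<bar>t - of_int (round (t / tau)) * tau\<bar>" using assms by linarith
  hence "tau / 2 \<le> saw t" unfolding saw_def by (simp add: mult.commute)
  thus ?thesis using saw_le[of t k] assms by linarith
qed

lemma saw_lipschitz: "\<bar>saw t - saw s\<bar> \<le> \<bar>t - s\<bar>"
proof -
  have "saw t \<le> \<bar>t - s\<bar> + saw s" for t s
    using saw_le[of t "round (s / tau)"] unfolding saw_def by (simp add: mult.commute)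
  from this[of t s] this[of s t] show ?thesis by linarith
qed

lemma continuous_on_saw: "continuous_on S saw"
proof -
  have "continuous (at t) saw" for t
    unfolding continuous_at_eps_delta dist_real_def
    using saw_lipschitz by (metis order.strict_trans1)
  thus ?thesis by (simp add: continuous_at_imp_continuous_on)
qed

lemma saw_half_period:
  fixes n :: int
  assumes "of_int n * tau / 2 \<le> s" "s \<le> t" "t \<le> (of_int n + 1) * tau / 2"
  shows "\<bar>saw t - saw s\<bar> = t - s"
proof -
  consider (even) m where "n = 2 * m" | (odd) m where "n = 2 * m - 1"
    by (metis evenE oddE add_diff_cancel)
  thus ?thesis
  proof cases
    case even
    have "saw x = x - of_int m * tau" if "of_int n * tau / 2 \<le> x" "x \<le> (of_int n + 1) * tau / 2" for x
      using saw_eq[of x m] that tauK_pos unfolding even by (simp add: field_simps)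
    thus ?thesis using assms by simp
  next
    case odd
    have "saw x = of_int m * tau - x" if "of_int n * tau / 2 \<le> x" "x \<le> (of_int n + 1) * tau / 2" for x
      using saw_eq[of x m] that tauK_pos unfolding odd by (simp add: field_simps)
    thus ?thesis using assms by simp
  qed
qed

lemma yhalf_spec:
  assumes "0 \<le> t" "t \<le> tau / 2"
  shows "a \<le> yhalf K t \<and> yhalf K t \<le> b \<and> FK K (yhalf K t) = t"
proof -
  obtain y where y: "a \<le> y" "y \<le> b" "FK K y = t"
    using IVT'[of "FK K" a t b] FK_a FK_b assms continuous_on_FK root_bounds by auto
  have "yhalf K t = y" unfolding yhalf_def
  proof (rule the_equality)
    fix z assume "a \<le> z \<and> z \<le> b \<and> FK K z = t"
    with y FK_less_iff[of z y] FK_less_iff[of y z] show "z = y" by (cases z y rule: linorder_cases) auto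
  qed (use y in auto)
  thus ?thesis using y by simp
qed

lemma yhalf_FK: "a \<le> y \<Longrightarrow> y \<le> b \<Longrightarrow> yhalf K (FK K y) = y"
  using yhalf_spec[of "FK K y"] FK_le[of a y] FK_le[of y b] FK_a FK_b FK_less_iff
  by (metis order.refl not_less_iff_gr_or_eq)

lemma FK_image: "FK K ` {a..b} = {0..tau / 2}"
proof
  show "FK K ` {a..b} \<subseteq> {0..tau / 2}" using FK_le FK_a FK_b by fastforce
  show "{0..tau / 2} \<subseteq> FK K ` {a..b}"
    using yhalf_spec by (force intro: rev_image_eqI)
qed

lemma continuous_on_yhalf: "continuous_on {0..tau / 2} (yhalf K)"
  using continuous_on_inv[OF continuous_on_FK compact_Icc] yhalf_FK FK_image by auto

lemma yhalf_mono: "0 \<le> t1 \<Longrightarrow> t1 \<le> t2 \<Longrightarrow> t2 \<le> tau / 2 \<Longrightarrow> yhalf K t1 \<le> yhalf K t2"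
  using yhalf_spec[of t1] yhalf_spec[of t2] FK_less_iff by (metis not_le order_trans)

lemma yK_spec: "a \<le> yK K t \<and> yK K t \<le> b \<and> FK K (yK K t) = saw t"
  unfolding yK_eq_yhalf_saw using yhalf_spec saw_bounds by auto

lemma continuous_on_yK: "continuous_on S (yK K)"
proof -
  have "continuous_on S (yhalf K \<circ> saw)"
    using continuous_on_compose[OF continuous_on_saw continuous_on_subset[OF continuous_on_yhalf]]
      saw_bounds by fastforce
  thus ?thesis unfolding yK_eq_yhalf_saw[abs_def] o_def .
qed

lemma yK_eq_yhalf:
  assumes "0 \<le> t" "t \<le> tau / 2"
  shows "yK K (of_int k * tau + t) = yhalf K t" "yK K (of_int k * tau - t) = yhalf K t"
  using saw_eq[of "of_int k * tau + t" k] saw_eq[of "of_int k * tau - t" k] assms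
  unfolding yK_eq_yhalf_saw by simp_all

lemma yK_period_a: "yK K (of_int k * tau) = a"
  and yK_period_b: "yK K (of_int k * tau + tau / 2) = b"
  using yK_eq_yhalf[of 0 k] yK_eq_yhalf[of "tau / 2" k] yhalf_FK[of a] yhalf_FK[of b]
    FK_a FK_b tauK_pos root_bounds by simp_all

end

section \<open>Sign changes of continuous functions\<close>

lemma continuous_pos_if_no_zero:
  fixes f :: "real \<Rightarrow> real"
  assumes "continuous_on {p..q} f" "0 < f p" "\<And>x. p < x \<Longrightarrow> x < q \<Longrightarrow> f x \<noteq> 0"
    and "p \<le> x" "x < q"
  shows "0 < f x"
proof (rule ccontr)
  assume "\<not> 0 < f x"
  then obtain z where "p \<le> z" "z \<le> x" "f z = 0"
    using IVT2'[of f x 0 p] assms continuous_on_subset[OF assms(1), of "{p..x}"] by auto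
  thus False using assms by (cases "z = p") auto
qed

lemma sign_change_has_root:
  fixes f :: "real \<Rightarrow> real"
  assumes "continuous_on {l..r} f" "l \<le> r" "f l * f r < 0"
  shows "\<exists>x. l < x \<and> x < r \<and> f x = 0"
proof -
  have "\<exists>x. l \<le> x \<and> x \<le> r \<and> f x = 0"
  proof (cases "f l < 0")
    case True thus ?thesis using IVT'[of f l 0 r] assms by (auto simp: mult_less_0_iff)
  next
    case False thus ?thesis using IVT2'[of f r 0 l] assms by (auto simp: mult_less_0_iff)
  qed
  then obtain x where "l \<le> x" "x \<le> r" "f x = 0" by blast
  moreover have "x \<noteq> l" "x \<noteq> r" using assms(3) \<open>f x = 0\<close> by auto
  ultimately show ?thesis by (intro exI[of _ x]) simp
qed

lemma neg_before_unique_root: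
  fixes f :: "real \<Rightarrow> real"
  assumes f: "continuous_on {l..r} f" "f l < 0" "0 < f r" and uniq: "\<exists>!z. l < z \<and> z < r \<and> f z = 0"
    and s: "l \<le> s" "s \<le> p" "p < r" and p: "f p < 0"
  shows "f s < 0"
proof (rule ccontr)
  assume "\<not> f s < 0"
  then obtain z1 where z1: "l \<le> z1" "z1 \<le> s" "f z1 = 0"
    using IVT'[of f l 0 s] f s continuous_on_subset[OF f(1), of "{l..s}"] by auto
  obtain z2 where z2: "p \<le> z2" "z2 \<le> r" "f z2 = 0"
    using IVT'[of f p 0 r] f s p continuous_on_subset[OF f(1), of "{p..r}"] by auto
  have "z1 \<noteq> l" "z1 \<noteq> p" "z2 \<noteq> p" "z2 \<noteq> r" using z1 z2 f p by auto
  hence "z1 = z2" using uniq z1 z2 s by (metis order.order_iff_strict order.strict_trans2)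
  thus False using z1 z2 s \<open>z1 \<noteq> p\<close> by linarith
qed

lemma pos_after_unique_root:
  fixes f :: "real \<Rightarrow> real"
  assumes f: "continuous_on {l..r} f" "f l < 0" "0 < f r" and uniq: "\<exists>!z. l < z \<and> z < r \<and> f z = 0"
    and s: "l < q" "q \<le> s" "s \<le> r" and q: "0 < f q"
  shows "0 < f s"
proof (rule ccontr)
  assume "\<not> 0 < f s"
  then obtain z2 where z2: "s \<le> z2" "z2 \<le> r" "f z2 = 0"
    using IVT'[of f s 0 r] f s continuous_on_subset[OF f(1), of "{s..r}"] by auto
  obtain z1 where z1: "l \<le> z1" "z1 \<le> q" "f z1 = 0"
    using IVT'[of f l 0 q] f s q continuous_on_subset[OF f(1), of "{l..q}"] by auto
  have "z1 \<noteq> l" "z1 \<noteq> q" "z2 \<noteq> q" "z2 \<noteq> r" using z1 z2 f q by auto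
  hence "z1 = z2" using uniq z1 z2 s by (metis order.order_iff_strict order.strict_trans1)
  thus False using z1 z2 s \<open>z1 \<noteq> q\<close> by linarith
qed

section \<open>The points at one sixth and one third of the period\<close>

text \<open>For \<open>\<lambda> = z + (y\<^sup>2 - y)/2\<close> on the curve \<open>z\<^sup>2 = (y\<^sup>2 - y)\<^sup>2/4 - K y\<close> one has
  \<open>\<lambda> y\<^sup>2 - (\<lambda> + K) y - \<lambda>\<^sup>2 = 0\<close>, a quadratic in \<open>y\<close> whose roots add up to \<open>1 + K/\<lambda>\<close>.
  Exchanging the two roots at fixed \<open>\<lambda>\<close> is an involution of the curve preserving \<open>dy/z\<close>.\<close>

lemma partner_on_curve:
  fixes y z K lam :: real
  assumes "z^2 = (y^2 - y)^2 / 4 - K * y" "lam = z + (y^2 - y) / 2" "lam \<noteq> 0"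
  defines "y' \<equiv> 1 + K / lam - y"
  shows "(lam - (y'^2 - y') / 2)^2 = (y'^2 - y')^2 / 4 - K * y'"
proof -
  have lam_y': "lam * y' = lam + K - lam * y" unfolding y'_def using assms(3) by (simp add: field_simps)
  have quad: "lam * y^2 - (lam + K) * y - lam^2 = 0"
  proof -
    have "(lam - (y^2 - y) / 2)^2 = (y^2 - y)^2 / 4 - K * y" using assms(1,2) by simp
    thus ?thesis unfolding power2_eq_square by algebra
  qed
  have "lam * (lam * y'^2 - (lam + K) * y' - lam^2) = (lam * y')^2 - (lam + K) * (lam * y') - lam^3"
    by (simp add: power2_eq_square power3_eq_cube algebra_simps)
  also have "\<dots> = lam * (lam * y^2 - (lam + K) * y - lam^2)" unfolding lam_y'
    by (simp add: power2_eq_square power3_eq_cube algebra_simps)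
  finally have "lam * y'^2 - (lam + K) * y' - lam^2 = 0" using quad assms(3) by simp
  thus ?thesis by (simp add: power2_eq_square algebra_simps)
qed

lemma partner_derivative_identity:
  fixes y z z' K lam :: real
  assumes "2 * z * z' = (y^2 - y) * (2 * y - 1) / 2 - K" "lam = z + (y^2 - y) / 2" "lam \<noteq> 0"
  defines "y' \<equiv> 1 + K / lam - y"
  shows "(- K * (z' + (2 * y - 1) / 2) / lam^2 - 1) * z = - (lam - (y'^2 - y') / 2)"
proof -
  have h: "z * z' = ((y^2 - y) * (2 * y - 1) / 2 - K) / 2" using assms(1) by (simp add: field_simps)
  have "z * (z' + (2 * y - 1) / 2) = z * z' + z * (2 * y - 1) / 2" by (simp add: algebra_simps)
  also have "\<dots> = ((2 * y - 1) * lam - K) / 2" unfolding h assms(2) by (simp add: field_simps)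
  finally have zz: "z * (z' + (2 * y - 1) / 2) = ((2 * y - 1) * lam - K) / 2" .
  have "(- K * (z' + (2 * y - 1) / 2) / lam^2 - 1) * z = - K * (z * (z' + (2 * y - 1) / 2)) / lam^2 - z"
    by (simp add: algebra_simps)
  also have "\<dots> = - K * ((2 * y - 1) * lam - K) / (2 * lam^2) - z" unfolding zz by simp
  also have "\<dots> = - (lam - (y'^2 - y') / 2)"
    unfolding y'_def using assms(2,3) by (simp add: field_simps power2_eq_square) algebra
  finally show ?thesis .
qed

context cubic_potential
begin

lemma minus_two_U_poly: "- 2 * U K y = (y^2 - y)^2 / 4 - K * y"
  unfolding U_def by (simp add: power2_eq_square field_simps)

lemma minus_two_U_zero: "- 2 * U K y = 0 \<Longrightarrow> y \<in> {0, a, b, c}"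
  unfolding minus_two_U_factor by auto

definition speed :: "real \<Rightarrow> real" where "speed y = sqrt (- 2 * U K y)"

definition lam :: "real \<Rightarrow> real \<Rightarrow> real" where
  "lam \<sigma> y = \<sigma> * speed y + (y^2 - y) / 2"

definition partner :: "real \<Rightarrow> real \<Rightarrow> real" where
  "partner \<sigma> y = 1 + K / lam \<sigma> y - y"

definition partner_speed :: "real \<Rightarrow> real \<Rightarrow> real" where
  "partner_speed \<sigma> y = lam \<sigma> y - ((partner \<sigma> y)^2 - partner \<sigma> y) / 2"

definition y_sixth :: real where "y_sixth = (1 - b) / 2"
definition y_third :: real where "y_third = (1 - a) / 2"

lemma minus_two_U_nonneg: "a \<le> y \<Longrightarrow> y \<le> b \<Longrightarrow> 0 \<le> - 2 * U K y"
  unfolding minus_two_U_factor using root_bounds by (intro divide_nonneg_pos mult_nonneg_nonneg) auto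

lemma speed_sq: "a \<le> y \<Longrightarrow> y \<le> b \<Longrightarrow> (speed y)^2 = - 2 * U K y"
  unfolding speed_def using minus_two_U_nonneg by simp

lemma inv_speed_eq: "inv_speed y = 1 / speed y"
  unfolding inv_speed_def speed_def ..

lemma speed_pos: "a < y \<Longrightarrow> y < b \<Longrightarrow> 0 < speed y"
  unfolding speed_def using minus_two_U_pos by simp

lemma speed_has_derivative:
  assumes "a < y" "y < b"
  shows "(speed has_real_derivative ((y^2 - y) * (2 * y - 1) / 2 - K) / (2 * speed y)) (at y)"
proof -
  have "((\<lambda>y. - 2 * U K y) has_real_derivative (y^2 - y) * (2 * y - 1) / 2 - K) (at y)"
    unfolding minus_two_U_poly by (rule derivative_eq_intros refl | simp)+
  from DERIV_chain2[OF DERIV_real_sqrt[OF minus_two_U_pos[OF assms]] this]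
  show ?thesis unfolding speed_def[abs_def] by (simp add: field_simps)
qed

lemma continuous_speed: "continuous_on S speed"
  unfolding speed_def[abs_def] minus_two_U_poly by (intro continuous_intros) auto

lemma lam_neg:
  assumes "\<sigma> \<in> {-1, 1}" "a \<le> y" "y \<le> b"
  shows "lam \<sigma> y < 0"
proof -
  have y: "0 < y" "y < 1" using assms root_bounds by auto
  have "- 2 * U K y < ((y - y^2) / 2)^2" unfolding minus_two_U_poly using y K_pos
    by (simp add: power2_eq_square field_simps)
  hence "speed y < \<bar>(y - y^2) / 2\<bar>" unfolding speed_def by (metis real_sqrt_abs real_sqrt_less_mono)
  moreover have "\<sigma> * speed y \<le> speed y"
    using assms minus_two_U_nonneg[of y] unfolding speed_def by auto
  moreover have "0 \<le> (y - y^2) / 2" using y by (simp add: power2_eq_square mult_left_le_one_le)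
  ultimately show ?thesis unfolding lam_def by (simp add: field_simps)
qed

lemma partner_speed_sq:
  assumes "\<sigma> \<in> {-1, 1}" "a \<le> y" "y \<le> b"
  shows "(partner_speed \<sigma> y)^2 = - 2 * U K (partner \<sigma> y)"
proof -
  have "(\<sigma> * speed y)^2 = (y^2 - y)^2 / 4 - K * y"
    using speed_sq[OF assms(2,3)] assms(1) unfolding minus_two_U_poly by auto
  from partner_on_curve[OF this lam_def lam_neg[OF assms, THEN less_imp_neq]]
  show ?thesis unfolding partner_speed_def partner_def minus_two_U_poly by simp
qed

lemma partner_has_derivative:
  assumes "\<sigma> \<in> {-1, 1}" "a < y" "y < b"
  shows "(partner \<sigma> has_real_derivative - \<sigma> * partner_speed \<sigma> y / speed y) (at y)"
proof -
  let ?z' = "\<sigma> * (((y^2 - y) * (2 * y - 1) / 2 - K) / (2 * speed y))"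
  let ?D = "- K * (?z' + (2 * y - 1) / 2) / (lam \<sigma> y)^2 - 1"
  have ne: "lam \<sigma> y \<noteq> 0" using lam_neg assms by (metis less_imp_le less_irrefl)
  have s: "0 < speed y" using speed_pos assms by simp
  have "(lam \<sigma> has_real_derivative ?z' + (2 * y - 1) / 2) (at y)"
    unfolding lam_def[abs_def] using speed_has_derivative[OF assms(2,3)]
    by (auto intro!: derivative_eq_intros simp: field_simps)
  hence deriv: "(partner \<sigma> has_real_derivative ?D) (at y)"
    unfolding partner_def[abs_def] using ne by (auto intro!: derivative_eq_intros simp: power2_eq_square)
  have "2 * (\<sigma> * speed y) * ?z' = (y^2 - y) * (2 * y - 1) / 2 - K"
    using s assms(1) by auto
  from partner_derivative_identity[OF this lam_def ne]
  have "?D * (\<sigma> * speed y) = - partner_speed \<sigma> y"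
    unfolding partner_speed_def partner_def .
  moreover have "E = - \<sigma> * w / v" if "E * (\<sigma> * v) = - w" "0 < v" for E w v :: real
    using that assms(1) by (auto simp: field_simps)
  ultimately show ?thesis using deriv s by simp
qed

lemma continuous_on_partner: "\<sigma> \<in> {-1, 1} \<Longrightarrow> continuous_on {a..b} (partner \<sigma>)"
  unfolding partner_def[abs_def] lam_def[abs_def] using lam_neg unfolding lam_def
  by (intro continuous_intros continuous_speed) (auto simp: less_le)

lemma continuous_on_partner_speed: "\<sigma> \<in> {-1, 1} \<Longrightarrow> continuous_on {a..b} (partner_speed \<sigma>)"
  unfolding partner_speed_def[abs_def] lam_def[abs_def]
  by (intro continuous_intros continuous_speed continuous_on_partner) auto


lemma partner_root:
  assumes "r \<in> {a, b, c}" "l = (r^2 - r) / 2"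
  shows "1 + K / l - r = (1 - r) / 2"
proof -
  have r: "r * (1 - r)^2 = 4 * K" "r \<noteq> 0" "r - 1 \<noteq> 0" using assms(1) root_eqs root_bounds by auto
  have K: "K = r * (1 - r)^2 / 4" using r(1) by simp
  have l: "l = r * (r - 1) / 2" using assms(2) by (simp add: power2_eq_square algebra_simps)
  have "K / l = (r * (1 - r)^2 / 4) / (r * (r - 1) / 2)" by (subst K, subst l, rule refl)
  also have "\<dots> = (r - 1) / 2" using r(2,3) by (simp add: field_simps power2_eq_square)
  finally show ?thesis by simp
qed

lemma y_sixth_third_order: "a < y_sixth" "y_sixth < y_third" "y_third < b"
proof -
  have "(y_sixth - a) * ((b - y_sixth) * (c - y_sixth)) = (1 - b) * (3 * b - 1)^2 / 8"
    using cubic_factor[of y_sixth] root_eqs(2) unfolding y_sixth_def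
    by (simp add: power2_eq_square field_simps)
  moreover have "0 < (1 - b) * (3 * b - 1)^2 / 8" using root_bounds by simp
  ultimately have "0 < (y_sixth - a) * ((b - y_sixth) * (c - y_sixth))" by linarith
  moreover have "0 < (b - y_sixth) * (c - y_sixth)" unfolding y_sixth_def using root_bounds by simp
  ultimately show "a < y_sixth" by (simp add: zero_less_mult_iff)
  have "(y_third - b) * ((y_third - a) * (c - y_third)) = - (1 - a) * (3 * a - 1)^2 / 8"
    using cubic_factor[of y_third] root_eqs(1) unfolding y_third_def
    by (simp add: power2_eq_square field_simps)
  moreover have "0 < (1 - a) * (3 * a - 1)^2 / 8" using root_bounds by simp
  ultimately have "(y_third - b) * ((y_third - a) * (c - y_third)) < 0" by linarith
  moreover have "0 < (y_third - a) * (c - y_third)" unfolding y_third_def using root_bounds by simp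
  ultimately have "y_third - b < 0" by (metis mult_less_0_iff order.asym)
  thus "y_third < b" by simp
  show "y_sixth < y_third" unfolding y_sixth_def y_third_def using root_bounds by simp
qed

lemma partner_a: "\<sigma> \<in> {-1, 1} \<Longrightarrow> partner \<sigma> a = y_third"
  and partner_speed_a_pos: "\<sigma> \<in> {-1, 1} \<Longrightarrow> 0 < partner_speed \<sigma> a"
proof -
  assume "\<sigma> \<in> {-1, 1}"
  have "speed a = 0" unfolding speed_def minus_two_U_factor by simp
  hence l: "lam \<sigma> a = (a^2 - a) / 2" unfolding lam_def by simp
  show p: "partner \<sigma> a = y_third" unfolding partner_def y_third_def by (rule partner_root[OF _ l]) simp
  have "0 < (1 - a) * (1 - 3 * a) / 8" using root_bounds by simp
  thus "0 < partner_speed \<sigma> a" unfolding partner_speed_def p l y_third_def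
    by (simp add: power2_eq_square field_simps)
qed

lemma speed_y_sixth: "speed y_sixth = (b * (1 - b) - y_sixth * (1 - y_sixth)) / 2"
proof -
  have "(b * (1 - b) - y_sixth * (1 - y_sixth)) / 2 = (1 - b) * (3 * b - 1) / 8"
    unfolding y_sixth_def by (simp add: field_simps)
  moreover have "0 \<le> (1 - b) * (3 * b - 1) / 8" using root_bounds by simp
  ultimately have nonneg: "0 \<le> (b * (1 - b) - y_sixth * (1 - y_sixth)) / 2" by linarith
  have "- 2 * U K y_sixth = ((b * (1 - b) - y_sixth * (1 - y_sixth)) / 2)^2"
    unfolding minus_two_U_poly y_sixth_def using root_eqs(2)
    by (simp add: power2_eq_square field_simps) algebra
  thus ?thesis unfolding speed_def using nonneg by simp
qed

lemma partner_y_sixth: "partner 1 y_sixth = y_sixth" "partner (-1) y_sixth = b"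
proof -
  have "lam 1 y_sixth < 0" using lam_neg[of 1 y_sixth] y_sixth_third_order by simp
  moreover have "K = - b * lam 1 y_sixth"
    unfolding lam_def speed_y_sixth unfolding y_sixth_def using root_eqs(2)
    by (simp add: power2_eq_square field_simps)
  ultimately have "K / lam 1 y_sixth = - b" by (simp add: field_simps)
  thus "partner 1 y_sixth = y_sixth" unfolding partner_def y_sixth_def by (simp add: field_simps)
  have "lam (-1) y_sixth = - b * (1 - b) / 2"
    unfolding lam_def speed_y_sixth by (simp add: power2_eq_square field_simps)
  moreover have "K = b * (1 - b)^2 / 4" using root_eqs(2) by simp
  ultimately have "K / lam (-1) y_sixth = (b * (1 - b)^2 / 4) / (- b * (1 - b) / 2)" by (simp only:)
  also have "\<dots> = - (1 - b) / 2"
  proof -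
    have "(b * d^2 / 4) / (- b * d / 2) = - d / 2" if "d \<noteq> 0" for d
      using that root_bounds by (simp add: power2_eq_square field_simps)
    from this[of "1 - b"] show ?thesis using root_bounds by simp
  qed
  finally have "K / lam (-1) y_sixth = - (1 - b) / 2" .
  thus "partner (-1) y_sixth = b" unfolding partner_def y_sixth_def by (simp add: field_simps)
qed

lemma partner_speed_nonzero:
  assumes "\<sigma> \<in> {-1, 1}" "a < y" "y < y_sixth"
  shows "partner_speed \<sigma> y \<noteq> 0"
proof
  assume w: "partner_speed \<sigma> y = 0"
  have y: "a \<le> y" "y \<le> b" using assms y_sixth_third_order by auto
  have l: "lam \<sigma> y = ((partner \<sigma> y)^2 - partner \<sigma> y) / 2" using w unfolding partner_speed_def by simp
  have "lam \<sigma> y \<noteq> 0" using lam_neg[OF assms(1) y] by simp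
  hence "partner \<sigma> y \<noteq> 0" using l by auto
  moreover have "- 2 * U K (partner \<sigma> y) = 0" using partner_speed_sq[OF assms(1) y] w by simp
  ultimately have r: "partner \<sigma> y \<in> {a, b, c}" using minus_two_U_zero by auto
  have "y = 1 + K / lam \<sigma> y - partner \<sigma> y" unfolding partner_def by simp
  also have "\<dots> = (1 - partner \<sigma> y) / 2" by (rule partner_root[OF r l])
  finally show False
    using r assms y_sixth_third_order root_bounds unfolding y_sixth_def y_third_def by auto
qed

lemma partner_speed_pos:
  assumes "\<sigma> \<in> {-1, 1}" "a \<le> y" "y < y_sixth"
  shows "0 < partner_speed \<sigma> y"
proof (rule continuous_pos_if_no_zero[where f = "partner_speed \<sigma>"])
  show "continuous_on {a..y_sixth} (partner_speed \<sigma>)"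
    using y_sixth_third_order by (intro continuous_on_subset[OF continuous_on_partner_speed[OF assms(1)]]) auto
qed (use assms partner_speed_a_pos partner_speed_nonzero in auto)

lemma partner_bounds:
  assumes \<sigma>: "\<sigma> \<in> {-1, 1}" and y: "a \<le> y" "y < y_sixth"
  shows "a < partner \<sigma> y \<and> partner \<sigma> y < b"
proof -
  have cont: "continuous_on {a..y_sixth} (partner \<sigma>)"
    using y_sixth_third_order by (intro continuous_on_subset[OF continuous_on_partner[OF \<sigma>]]) auto
  have ne: "partner \<sigma> x \<noteq> a \<and> partner \<sigma> x \<noteq> b" if "a < x" "x < y_sixth" for x
  proof -
    have "a \<le> x" "x \<le> b" using that y_sixth_third_order by auto
    hence "(partner_speed \<sigma> x)^2 = - 2 * U K (partner \<sigma> x)" by (rule partner_speed_sq[OF \<sigma>])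
    moreover have "0 < partner_speed \<sigma> x" using partner_speed_pos[OF \<sigma>] that by simp
    ultimately have "0 < - 2 * U K (partner \<sigma> x)" by (metis zero_less_power2 less_irrefl)
    thus ?thesis unfolding minus_two_U_factor by auto
  qed
  hence ne_a: "partner \<sigma> x - a \<noteq> 0" and ne_b: "b - partner \<sigma> x \<noteq> 0"
    if "a < x" "x < y_sixth" for x using ne[OF that] by auto
  have "0 < partner \<sigma> y - a"
    by (rule continuous_pos_if_no_zero[where f = "\<lambda>x. partner \<sigma> x - a"])
       (use cont ne_a y partner_a[OF \<sigma>] y_sixth_third_order in \<open>auto intro!: continuous_intros\<close>)
  moreover have "0 < b - partner \<sigma> y"
    by (rule continuous_pos_if_no_zero[where f = "\<lambda>x. b - partner \<sigma> x"])
       (use cont ne_b y partner_a[OF \<sigma>] y_sixth_third_order in \<open>auto intro!: continuous_intros\<close>)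
  ultimately show ?thesis by simp
qed

lemma partner_image: "\<sigma> \<in> {-1, 1} \<Longrightarrow> partner \<sigma> ` {a..y_sixth} \<subseteq> {a..b}"
proof clarify
  fix y assume \<sigma>: "\<sigma> \<in> {-1, 1}" and "y \<in> {a..y_sixth}"
  then consider "a \<le> y" "y < y_sixth" | "y = y_sixth" by fastforce
  thus "partner \<sigma> y \<in> {a..b}"
    using partner_bounds[OF \<sigma>, of y] partner_y_sixth \<sigma> y_sixth_third_order by cases auto
qed

text \<open>The derivative vanishes because \<open>partner \<sigma>\<close> carries \<open>dy / speed\<close> to \<open>-\<sigma> dy / speed\<close>.\<close>

lemma FK_partner_invariant:
  assumes \<sigma>: "\<sigma> \<in> {-1, 1}"
  shows "FK K (partner \<sigma> y_sixth) + \<sigma> * FK K y_sixth = FK K (partner \<sigma> a) + \<sigma> * FK K a"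
proof (rule DERIV_isconst_end[OF y_sixth_third_order(1)])
  have sub: "{a..y_sixth} \<subseteq> {a..b}" using y_sixth_third_order by auto
  show "continuous_on {a..y_sixth} (\<lambda>y. FK K (partner \<sigma> y) + \<sigma> * FK K y)"
    using continuous_on_compose2[OF continuous_on_FK continuous_on_subset[OF continuous_on_partner[OF \<sigma>] sub]
        partner_image[OF \<sigma>]] continuous_on_subset[OF continuous_on_FK sub]
    by (intro continuous_intros)
  fix y assume y: "a < y" "y < y_sixth"
  have yb: "a < y" "y < b" and p: "a < partner \<sigma> y" "partner \<sigma> y < b"
    using y y_sixth_third_order partner_bounds[OF \<sigma>, of y] by auto
  have w: "0 < partner_speed \<sigma> y" using partner_speed_pos[OF \<sigma>] y by simp
  have "- 2 * U K (partner \<sigma> y) = (partner_speed \<sigma> y)^2" using partner_speed_sq[OF \<sigma>, of y] yb by simp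
  hence "inv_speed (partner \<sigma> y) = 1 / partner_speed \<sigma> y" unfolding inv_speed_def using w by simp
  moreover have "((\<lambda>y. FK K (partner \<sigma> y) + \<sigma> * FK K y) has_real_derivative
      inv_speed (partner \<sigma> y) * (- \<sigma> * partner_speed \<sigma> y / speed y) + \<sigma> * inv_speed y) (at y)"
    by (rule DERIV_add[OF DERIV_chain2[OF FK_has_derivative[OF p] partner_has_derivative[OF \<sigma> yb]]
          DERIV_cmult[OF FK_has_derivative[OF yb]]])
  ultimately show "((\<lambda>y. FK K (partner \<sigma> y) + \<sigma> * FK K y) has_real_derivative 0) (at y)"
    using w speed_pos[OF yb] by (simp add: inv_speed_eq)
qed

lemma FK_y_sixth: "FK K y_sixth = tau / 6" and FK_y_third: "FK K y_third = tau / 3"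
proof -
  have "2 * FK K y_sixth = FK K y_third"
    using FK_partner_invariant[of 1] partner_y_sixth partner_a FK_a by simp
  moreover have "tau / 2 - FK K y_sixth = FK K y_third"
    using FK_partner_invariant[of "-1"] partner_y_sixth partner_a FK_a FK_b by simp
  ultimately show "FK K y_sixth = tau / 6" "FK K y_third = tau / 3" by linarith+
qed

lemma yhalf_sixth: "yhalf K (tau / 6) = y_sixth" and yhalf_third: "yhalf K (tau / 3) = y_third"
  using yhalf_FK[of y_sixth] yhalf_FK[of y_third] FK_y_sixth FK_y_third y_sixth_third_order
  by simp_all

lemma yK_period_minus: "0 \<le> t \<Longrightarrow> t \<le> tau / 2 \<Longrightarrow> yK K (tau - t) = yhalf K t"
  using yK_eq_yhalf(2)[of t 1] by simp

lemma yK_two_thirds: "yK K (2 * tau / 3) = y_third"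
  and yK_five_sixths: "yK K (5 * tau / 6) = y_sixth"
  using yK_period_minus[of "tau / 3"] yK_period_minus[of "tau / 6"] yhalf_third yhalf_sixth tauK_pos
  by (simp_all add: field_simps)

end

section \<open>Monotonicity of the period\<close>

definition landen_X :: "real \<Rightarrow> real" where
  "landen_X s = (1 - 3 * s^2 + 2 * sqrt (s^3 * (3 * s + 2))) / 4"

definition landen_Y :: "real \<Rightarrow> real" where
  "landen_Y s = sqrt (s^3 * (3 * s + 2))"

lemma landen_Y_mono: "0 < s2 \<Longrightarrow> s2 \<le> s1 \<Longrightarrow> landen_Y s2 \<le> landen_Y s1"
  unfolding landen_Y_def by (intro real_sqrt_le_mono mult_mono power_mono) auto

lemma landen_Y_le:
  assumes "0 < s" "s < 1/3"
  shows "landen_Y s \<le> s * (s + 1)"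
proof -
  have "s^2 < (1/3)^2" using assms by (intro power_strict_mono) auto
  hence "0 \<le> s^2 * (1 - 2 * s^2)" by (simp add: power2_eq_square)
  moreover have "(s * (s + 1))^2 - s^3 * (3 * s + 2) = s^2 * (1 - 2 * s^2)"
    by (simp add: power2_eq_square power3_eq_cube algebra_simps)
  ultimately have "s^3 * (3 * s + 2) \<le> (s * (s + 1))^2" by linarith
  hence "landen_Y s \<le> sqrt ((s * (s + 1))^2)" unfolding landen_Y_def by (rule real_sqrt_le_mono)
  thus ?thesis using assms by simp
qed

lemma landen_X_mono:
  assumes "0 < s2" "s2 \<le> s1" "s1 < 1/3"
  shows "landen_X s2 \<le> landen_X s1"
proof (cases "s1 = s2")
  case False
  hence lt: "s2 < s1" using assms by simp
  define q1 where "q1 = landen_Y s1"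
  define q2 where "q2 = landen_Y s2"
  have q: "0 < q1" "0 \<le> q2" "q1^2 = s1^3 * (3 * s1 + 2)" "q2^2 = s2^3 * (3 * s2 + 2)"
    unfolding q1_def q2_def landen_Y_def using assms by auto
  have d: "0 < s1^2 - s2^2" using lt assms by (simp add: power_strict_mono)
  have "3 * (s1^2 - s2^2) * (q1 + q2) \<le> 3 * (s1^2 - s2^2) * (s1 * (s1 + 1) + s2 * (s2 + 1))"
    using landen_Y_le[of s1] landen_Y_le[of s2] assms d unfolding q1_def q2_def
    by (intro mult_left_mono add_mono) auto
  also have "\<dots> \<le> 2 * (q1^2 - q2^2)"
  proof -
    have "2 * (q1^2 - q2^2) - 3 * (s1^2 - s2^2) * (s1 * (s1 + 1) + s2 * (s2 + 1))
        = (s1 - s2) * (3 * (s1 + s2) * (s1^2 + s2^2) + (s1 - s2)^2)"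
      unfolding q by (simp add: power2_eq_square power3_eq_cube algebra_simps)
    moreover have "0 \<le> (s1 - s2) * (3 * (s1 + s2) * (s1^2 + s2^2) + (s1 - s2)^2)" using lt assms by simp
    ultimately show ?thesis by simp
  qed
  also have "\<dots> = 2 * (q1 - q2) * (q1 + q2)" by (simp add: power2_eq_square algebra_simps)
  finally have "3 * (s1^2 - s2^2) \<le> 2 * (q1 - q2)" using q by (simp add: mult_le_cancel_right)
  thus ?thesis unfolding landen_X_def q1_def q2_def landen_Y_def by (simp add: field_simps)
qed simp

context cubic_potential
begin

lemma root_sum_prod: "a * b = (c - 1)^2" "a + b = 2 - c"
proof -
  have "(0 - a) * (0 - b) * (0 - c) = - 4 * K" using cubic_factor[of 0] by simp
  hence "a * b * c = c * (1 - c)^2" using root_eqs(3) by (simp add: algebra_simps)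
  hence "c * (a * b) = c * (c - 1)^2" by (simp add: power2_commute mult_ac)
  thus ab: "a * b = (c - 1)^2" using root_bounds by simp
  have "(1 - a) * (1 - b) * (1 - c) = - c * (1 - c)^2" using cubic_factor[of 1] root_eqs(3) by simp
  hence "(1 - c) * ((1 - a) * (1 - b)) = (1 - c) * (- c * (1 - c))" by (simp add: power2_eq_square mult_ac)
  moreover have "1 - c \<noteq> 0" using root_bounds by simp
  ultimately have "(1 - a) * (1 - b) = - c * (1 - c)" by (metis mult_left_cancel)
  thus "a + b = 2 - c" using ab by (simp add: power2_eq_square algebra_simps)
qed

text \<open>\<open>X0\<close> and \<open>Y0\<close> are not monotone in \<open>K\<close>, but after one Landen step both parameters
  are increasing functions of \<open>c - 1\<close>.\<close>

lemma tauK_eq_landen: "tau = 8 * elliptic_integral (landen_X (c - 1)) (landen_Y (c - 1)) (pi/2)"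
proof -
  have "X0 + Y0 = c * (a + b) - 2 * (a * b)" unfolding X0_def Y0_def by (simp add: algebra_simps)
  hence "X0 + Y0 = 1 - 3 * (c - 1)^2" unfolding root_sum_prod by (simp add: power2_eq_square algebra_simps)
  moreover have "X0 * Y0 = (c - 1)^3 * (3 * (c - 1) + 2)"
  proof -
    have "X0 * Y0 = (a * b) * (c^2 - c * (a + b) + a * b)"
      unfolding X0_def Y0_def by (simp add: power2_eq_square algebra_simps)
    thus ?thesis unfolding root_sum_prod by (simp add: power2_eq_square power3_eq_cube algebra_simps)
  qed
  ultimately have Y: "sqrt X0 * sqrt Y0 = landen_Y (c - 1)" and sum: "X0 + Y0 = 1 - 3 * (c - 1)^2"
    unfolding landen_Y_def by (simp_all flip: real_sqrt_mult)
  have "((sqrt X0 + sqrt Y0) / 2)^2 = ((sqrt X0)^2 + (sqrt Y0)^2 + 2 * (sqrt X0 * sqrt Y0)) / 4"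
    by (simp add: power2_eq_square algebra_simps)
  also have "\<dots> = landen_X (c - 1)"
    unfolding Y using X0_Y0_pos sum unfolding landen_X_def landen_Y_def by simp
  finally show ?thesis
    using tauK_eq_elliptic landen_transformation[of "sqrt X0" "sqrt Y0"] X0_Y0_pos Y by simp
qed

end

lemma cK_strict_mono:
  assumes "0 < K2" "K2 < K1" "K1 < 1/27"
  shows "cK K2 < cK K1"
proof (rule ccontr)
  interpret k1: cubic_potential K1 by unfold_locales (use assms in auto)
  interpret k2: cubic_potential K2 by unfold_locales (use assms in auto)
  assume "\<not> cK K2 < cK K1"
  hence "cK K1 * (cK K1 - 1)^2 \<le> cK K2 * (cK K2 - 1)^2"
    using k1.root_bounds k2.root_bounds by (intro mult_mono power_mono) auto
  thus False using k1.root_eqs(3) k2.root_eqs(3) assms by (simp add: power2_commute)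
qed

lemma tauK_antimono:
  assumes "0 < K2" "K2 < K1" "K1 < 1/27"
  shows "tauK K1 \<le> tauK K2"
proof -
  interpret k1: cubic_potential K1 by unfold_locales (use assms in auto)
  interpret k2: cubic_potential K2 by unfold_locales (use assms in auto)
  have s: "0 < cK K2 - 1" "cK K2 - 1 \<le> cK K1 - 1" "cK K1 - 1 < 1/3"
    using cK_strict_mono[OF assms] k1.root_bounds k2.root_bounds by auto
  have "(cK K2 - 1)^2 < (1/3)^2" using s by (intro power_strict_mono) auto
  hence "3 * (cK K2 - 1)^2 < 1" by (simp add: power2_eq_square)
  hence "0 < landen_Y (cK K2 - 1)" "0 < landen_X (cK K2 - 1)"
    using s unfolding landen_X_def landen_Y_def by (auto intro!: add_pos_nonneg)
  thus ?thesis using k1.tauK_eq_landen k2.tauK_eq_landen landen_X_mono[OF s] landen_Y_mono[OF s(1,2)]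
    by (simp add: complete_elliptic_integral_antimono)
qed


section \<open>Comparison of two solutions\<close>

locale potential_pair =
  fixes K1 K2 :: real
  assumes K2_pos: "0 < K2" and K2_less: "K2 < K1" and K1_less: "K1 < 1/27"
begin

sublocale k1: cubic_potential K1 using K2_pos K2_less K1_less by unfold_locales auto
sublocale k2: cubic_potential K2 using K2_pos K2_less K1_less by unfold_locales auto

lemma aK_less: "aK K2 < aK K1"
proof -
  have "(aK K2 - aK K1) * ((bK K1 - aK K2) * (cK K1 - aK K2)) = 4 * K2 - 4 * K1"
    using k1.cubic_factor[of "aK K2"] k2.root_eqs(1) by (simp add: algebra_simps)
  moreover have "0 < (bK K1 - aK K2) * (cK K1 - aK K2)" using k1.root_bounds k2.root_bounds by simp
  ultimately have "(aK K2 - aK K1) * ((bK K1 - aK K2) * (cK K1 - aK K2)) < 0"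
    and "0 < (bK K1 - aK K2) * (cK K1 - aK K2)" using K2_less by auto
  hence "aK K2 - aK K1 < 0" by (metis mult_less_0_iff order.asym)
  thus ?thesis by simp
qed

lemma bK_less: "bK K1 < bK K2"
proof -
  have "(bK K2 - bK K1) * ((bK K2 - aK K1) * (cK K1 - bK K2)) = 4 * K1 - 4 * K2"
    using k1.cubic_factor[of "bK K2"] k2.root_eqs(2) by (simp add: algebra_simps)
  moreover have "0 < (bK K2 - aK K1) * (cK K1 - bK K2)" using k1.root_bounds k2.root_bounds by simp
  ultimately have "0 < (bK K2 - bK K1) * ((bK K2 - aK K1) * (cK K1 - bK K2))"
    and "0 < (bK K2 - aK K1) * (cK K1 - bK K2)" using K2_less by auto
  hence "0 < bK K2 - bK K1" by (simp add: zero_less_mult_iff)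
  thus ?thesis by simp
qed

lemma inv_speed_less: "aK K1 < x \<Longrightarrow> x < bK K1 \<Longrightarrow> k2.inv_speed x < k1.inv_speed x"
  unfolding k1.inv_speed_def k2.inv_speed_def U_def
  using k1.minus_two_U_pos[of x] k1.root_bounds K2_less
  by (simp add: U_def frac_less2)

lemma FK_increment_less:
  assumes "aK K1 \<le> v1" "v1 < v2" "v2 \<le> bK K1"
  shows "FK K2 v2 - FK K2 v1 < FK K1 v2 - FK K1 v1"
proof -
  have sub: "{v1..v2} \<subseteq> {aK K1..bK K1}" "{v1..v2} \<subseteq> {aK K2..bK K2}" using assms aK_less bK_less by auto
  have "(\<lambda>v. FK K1 v - FK K2 v) v1 < (\<lambda>v. FK K1 v - FK K2 v) v2"
  proof (rule DERIV_pos_imp_increasing_open[OF assms(2)])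
    fix x assume x: "v1 < x" "x < v2"
    have x1: "aK K1 < x" "x < bK K1" and x2: "aK K2 < x" "x < bK K2" using x assms aK_less bK_less by auto
    show "\<exists>d. ((\<lambda>v. FK K1 v - FK K2 v) has_real_derivative d) (at x) \<and> 0 < d"
      using DERIV_diff[OF k1.FK_has_derivative[OF x1] k2.FK_has_derivative[OF x2]] inv_speed_less[OF x1]
      by auto
  qed (use continuous_on_subset[OF k1.continuous_on_FK sub(1)] continuous_on_subset[OF k2.continuous_on_FK sub(2)]
        in \<open>auto intro!: continuous_intros\<close>)
  thus ?thesis by simp
qed

definition gap :: "real \<Rightarrow> real \<Rightarrow> real" where
  "gap t0 s = yK K1 (s + t0) - yK K2 s"

lemma continuous_on_gap: "continuous_on S (gap t0)"
  unfolding gap_def[abs_def]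
  by (intro continuous_intros continuous_on_compose2[OF k1.continuous_on_yK[of UNIV]] k2.continuous_on_yK) auto

lemma gap_at_period: "0 < gap t0 (of_int k * tauK K2)"
  unfolding gap_def k2.yK_period_a using k1.yK_spec[of "of_int k * tauK K2 + t0"] aK_less by linarith

lemma gap_at_half_period: "gap t0 (of_int k * tauK K2 + tauK K2 / 2) < 0"
  unfolding gap_def k2.yK_period_b
  using k1.yK_spec[of "of_int k * tauK K2 + tauK K2 / 2 + t0"] bK_less by linarith

lemma gap_sign_change:
  fixes n :: int
  shows "gap t0 (of_int n * tauK K2 / 2) * gap t0 ((of_int n + 1) * tauK K2 / 2) < 0"
proof -
  consider (even) m where "n = 2 * m" | (odd) m where "n = 2 * m + 1" by (metis evenE oddE)
  thus ?thesis
  proof cases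
    case even
    hence e: "of_int n * tauK K2 / 2 = of_int m * tauK K2"
      "(of_int n + 1) * tauK K2 / 2 = of_int m * tauK K2 + tauK K2 / 2" by (simp_all add: field_simps)
    show ?thesis unfolding e using gap_at_period[of t0 m] gap_at_half_period[of t0 m] by (simp add: mult_pos_neg)
  next
    case odd
    hence e: "of_int n * tauK K2 / 2 = of_int m * tauK K2 + tauK K2 / 2"
      "(of_int n + 1) * tauK K2 / 2 = of_int (m + 1) * tauK K2" by (simp_all add: field_simps)
    show ?thesis unfolding e using gap_at_half_period[of t0 m] gap_at_period[of t0 "m + 1"] by (simp add: mult_neg_pos)
  qed
qed

text \<open>Two zeros in one half period of \<open>y\<^sub>K\<^sub>2\<close> would force equal \<open>F\<^sub>K\<^sub>2\<close>- and \<open>F\<^sub>K\<^sub>1\<close>-increments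
  between the two values, contradicting \<open>FK_increment_less\<close>.\<close>

lemma gap_zero_unique:
  fixes n :: int
  assumes s: "of_int n * tauK K2 / 2 \<le> s" "s < s'" "s' \<le> (of_int n + 1) * tauK K2 / 2"
    and zero: "gap t0 s = 0" "gap t0 s' = 0"
  shows False
proof -
  define v where "v = yK K2 s"
  define v' where "v' = yK K2 s'"
  have v1: "v = yK K1 (s + t0)" "v' = yK K1 (s' + t0)" using zero unfolding gap_def v_def v'_def by auto
  have range: "aK K1 \<le> v" "v \<le> bK K1" "aK K1 \<le> v'" "v' \<le> bK K1" using v1 k1.yK_spec by auto
  have "\<bar>FK K1 v' - FK K1 v\<bar> \<le> s' - s"
    using v1 k1.yK_spec k1.saw_lipschitz[of "s' + t0" "s + t0"] s by simp
  moreover have F2: "\<bar>FK K2 v' - FK K2 v\<bar> = s' - s"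
    unfolding v_def v'_def using k2.yK_spec k2.saw_half_period[OF s(1) less_imp_le[OF s(2)] s(3)] by simp
  moreover have "v \<noteq> v'" using F2 s by auto
  ultimately show False
    using FK_increment_less[of v v'] FK_increment_less[of v' v] range
      k2.FK_less[of v v'] k2.FK_less[of v' v] aK_less bK_less
    by (cases v v' rule: linorder_cases) auto
qed

lemma unique_intersection:
  fixes n :: int
  shows "\<exists>!t. of_int n * tauK K2 / 2 < t \<and> t < (of_int n + 1) * tauK K2 / 2 \<and> yK K1 (t + t0) = yK K2 t"
proof -
  have "of_int n * tauK K2 / 2 \<le> (of_int n + 1) * tauK K2 / 2" using k2.tauK_pos by (simp add: field_simps)
  from sign_change_has_root[OF continuous_on_gap this gap_sign_change]
  obtain t where "of_int n * tauK K2 / 2 < t" "t < (of_int n + 1) * tauK K2 / 2" "gap t0 t = 0" by blast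
  moreover have "t = t'" if "of_int n * tauK K2 / 2 < t" "t < (of_int n + 1) * tauK K2 / 2" "gap t0 t = 0"
    "of_int n * tauK K2 / 2 < t'" "t' < (of_int n + 1) * tauK K2 / 2" "gap t0 t' = 0" for t t'
    using gap_zero_unique[of n t t' t0] gap_zero_unique[of n t' t t0] that
    by (cases t t' rule: linorder_cases) auto
  ultimately show ?thesis unfolding gap_def by (intro ex1I[of _ t]) auto
qed


lemma gap_second_half_period:
  "gap t0 (tauK K2 / 2) < 0" "0 < gap t0 (tauK K2)"
  "\<exists>!z. tauK K2 / 2 < z \<and> z < tauK K2 \<and> gap t0 z = 0"
  using gap_at_half_period[of t0 0] gap_at_period[of t0 1] unique_intersection[of 1 t0]
  unfolding gap_def by simp_all

lemma intersection_two_thirds: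
  assumes "0 \<le> t" "t \<le> tauK K2 / 6"
  shows "yK K1 (2 * tauK K1 / 3 - t) < yK K2 (2 * tauK K2 / 3 - t)"
proof -
  define t0 where "t0 = 2 * (tauK K1 - tauK K2) / 3"
  have "k1.y_third < k2.y_third"
    unfolding k1.y_third_def k2.y_third_def using aK_less by simp
  hence "gap t0 (2 * tauK K2 / 3) < 0"
    unfolding gap_def t0_def using k1.yK_two_thirds k2.yK_two_thirds by (simp add: field_simps)
  from neg_before_unique_root[OF continuous_on_gap gap_second_half_period _ _ _ this, of "2 * tauK K2 / 3 - t"]
  have "gap t0 (2 * tauK K2 / 3 - t) < 0" using assms k2.tauK_pos by simp
  moreover have "2 * tauK K2 / 3 - t + t0 = 2 * tauK K1 / 3 - t" unfolding t0_def by (simp add: field_simps)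
  ultimately show ?thesis unfolding gap_def by simp
qed

lemma intersection_period:
  assumes "tauK K2 \<le> 3 * tauK K1" "0 \<le> t" "t \<le> tauK K2 / 6"
  shows "yK K2 (tauK K2 - t) < yK K1 (tauK K1 - t)"
proof -
  define t0 where "t0 = tauK K1 - tauK K2"
  have "tauK K1 \<le> tauK K2" using tauK_antimono K2_pos K2_less K1_less by blast
  hence "k1.y_sixth \<le> yhalf K1 (tauK K2 / 6)"
    using k1.yhalf_sixth k1.yhalf_mono[of "tauK K1 / 6" "tauK K2 / 6"] assms k1.tauK_pos by simp
  also have "\<dots> = yK K1 (5 * tauK K2 / 6 + t0)"
    using k1.yK_period_minus[of "tauK K2 / 6"] assms k2.tauK_pos unfolding t0_def by (simp add: field_simps)
  finally have "0 < gap t0 (5 * tauK K2 / 6)"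
    unfolding gap_def k2.yK_five_sixths using bK_less unfolding k1.y_sixth_def k2.y_sixth_def by simp
  from pos_after_unique_root[OF continuous_on_gap gap_second_half_period _ _ _ this, of "tauK K2 - t"]
  have "0 < gap t0 (tauK K2 - t)" using assms k2.tauK_pos by simp
  thus ?thesis unfolding gap_def t0_def by simp
qed

end

theorem lemma6p2:
  fixes K1 K2 :: real
  assumes "0 < K2" and "K2 < K1" and "K1 < 1/27"
  shows "(\<forall>t0::real. \<forall>n::int.
            \<exists>!t. of_int n * tauK K2 / 2 < t \<and> t < (of_int n + 1) * tauK K2 / 2 \<and>
                 yK K1 (t + t0) = yK K2 t)
       \<and> (\<forall>t. 0 \<le> t \<and> t \<le> tauK K2 / 6 \<longrightarrow>
              yK K2 (2 * tauK K2 / 3 - t) > yK K1 (2 * tauK K1 / 3 - t))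
       \<and> (tauK K2 \<le> 3 * tauK K1 \<longrightarrow>
            (\<forall>t. 0 \<le> t \<and> t \<le> tauK K2 / 6 \<longrightarrow>
              yK K2 (tauK K2 - t) < yK K1 (tauK K1 - t)))"
proof -
  interpret potential_pair K1 K2 using assms by unfold_locales
  show ?thesis using unique_intersection intersection_two_thirds intersection_period by blast
qed

end
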